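(* Let $q_1\le q_2\le\dots\le q_L$ be positive reals, and suppose there exist distinct positive reals $p_1,\dots,p_K$ such that: (C1) for each $1\le\ell\le L$, $q_\ell=\sum_{k\in T_\ell}p_k$ for some $T_\ell\subseteq\{1,\dots,K\}$; (C2) for each $1\le k\le K$ there exists $\ell$ with $q_\ell=p_k$; (C3) $\sum_{k\in T}p_k\neq\sum_{k\in T'}p_k$ for all distinct $T,T'\subseteq\{1,\dots,K\}$. Then the sparsest-fit algorithm run on $q_1,\dots,q_L$ outputs $k(L)=K$ and, up to relabeling of the indices $1,\dots,K$, the values $p_1,\dots,p_K$ and the sets $A_k=\{\ell: k\in T_\ell\}$, $1\le k\le K$.
   Context: Sparsest-fit algorithm on input $q_1\le\dots\le q_L$: initialize $p_0=0$, $k(0)=0$, and $A_k=\emptyset$ for all $k$. For $\ell=1,\dots,L$: if $q_\ell=\sum_{k\in T}p_k$ for some $T\subseteq\{0,1,\dots,k(\ell-1)\}$ (using the values $p_k$ found so far), set $k(\ell)=k(\ell-1)$ and $A_k\leftarrow A_k\cup\{\ell\}$ for all $k\in T$; otherwise set $k(\ell)=k(\ell-1)+1$, $p_{k(\ell)}=q_\ell$ and $A_{k(\ell)}\leftarrow A_{k(\ell)}\cup\{\ell\}$. Finally output $k(L)$ and $(p_k,A_k)$ for $1\le k\le k(L)$. The algorithm has no knowledge of $K$ or of the sets $T_\ell$. *)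

theory Defs
  imports Main "HOL.Real"
begin

text \<open>Sparsest-fit algorithm, modelled as a (nondeterministic) execution relation.
  The state after processing q_1..q_l is (k(l), p, A) with p :: nat => real
  (p 0 = 0; p j for 1 <= j <= k(l) are the values found) and A :: nat => nat set.
  The choice of the subset T in the "fit" case is left arbitrary (any admissible T).\<close>

inductive sf_exec ::
  "(nat \<Rightarrow> real) \<Rightarrow> nat \<Rightarrow> nat \<times> (nat \<Rightarrow> real) \<times> (nat \<Rightarrow> nat set) \<Rightarrow> bool"
  for q :: "nat \<Rightarrow> real" where
  init: "sf_exec q 0 (0, \<lambda>_. 0, \<lambda>_. {})"
| fit: "\<lbrakk> sf_exec q l (k, p, A); T \<subseteq> {0..k}; q (Suc l) = sum p T \<rbrakk>
        \<Longrightarrow> sf_exec q (Suc l)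
              (k, p, \<lambda>j. if j \<in> T then insert (Suc l) (A j) else A j)"
| new: "\<lbrakk> sf_exec q l (k, p, A); \<not> (\<exists>T. T \<subseteq> {0..k} \<and> q (Suc l) = sum p T) \<rbrakk>
        \<Longrightarrow> sf_exec q (Suc l)
              (Suc k, p(Suc k := q (Suc l)), A(Suc k := insert (Suc l) (A (Suc k))))"

end

theory Submission
  imports Defs
begin

text \<open>Invariant: after reading \<open>q 1, \<dots>, q l\<close> the values found are, under an injective
  relabelling \<open>\<sigma>\<close>, exactly the true values \<open>p j\<close> occurring among \<open>q 1, \<dots>, q l\<close>, and every
  \<open>T l'\<close> with \<open>l' \<le> l\<close> consists of found values. By (C3) a fit of \<open>q (l+1)\<close> by found
  values can only reproduce \<open>T (l+1)\<close>. If there is no fit, some \<open>j \<in> T (l+1)\<close> is not yet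
  found, so by (C2) \<open>p j = q l''\<close> for some \<open>l'' > l\<close>; monotonicity and positivity give
  \<open>q (l+1) \<le> p j \<le> q (l+1)\<close>, whence \<open>T (l+1) = {j}\<close> and the new value is \<open>p j\<close>.
  At the end (C2) forces all \<open>K\<close> values to have been found.\<close>

lemma sf_exec_p_zero: "sf_exec q l (k, p, A) \<Longrightarrow> p 0 = 0"
  by (induction l "(k, p, A)" arbitrary: k p A rule: sf_exec.induct) auto

lemma sf_exec_A_empty_beyond: "sf_exec q l (k, p, A) \<Longrightarrow> i > k \<Longrightarrow> A i = {}"
  by (induction l "(k, p, A)" arbitrary: k p A i rule: sf_exec.induct) auto

lemma sf_exec_exists: "\<exists>st. sf_exec q l st"
proof (induction l)
  case 0
  show ?case using sf_exec.init by blast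
next
  case (Suc l)
  then obtain k p A where ex: "sf_exec q l (k, p, A)" by (metis prod_cases3)
  show ?case
  proof (cases "\<exists>U. U \<subseteq> {0..k} \<and> q (Suc l) = sum p U")
    case True
    with ex show ?thesis by (blast intro: sf_exec.fit)
  next
    case False
    with ex show ?thesis by (blast intro: sf_exec.new)
  qed
qed

lemma filter_atLeastAtMost_Suc:
  "{x\<in>{1..Suc n}. P x} = (if P (Suc n) then insert (Suc n) {x\<in>{1..n}. P x} else {x\<in>{1..n}. P x})"
  by (auto simp: le_Suc_eq)

lemma sum_relabel:
  fixes p p' :: "nat \<Rightarrow> 'b::comm_monoid_add"
  assumes "inj_on \<sigma> {1..k}" "p' 0 = 0" "\<forall>i\<in>{1..k}. p' i = p (\<sigma> i)" "U \<subseteq> {0..k}"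
  shows "sum p' U = sum p (\<sigma> ` (U - {0}))"
proof -
  have U0: "U - {0} \<subseteq> {1..k}" using assms(4) by auto
  have "sum p' U = sum p' (U - {0})"
    using assms(2) finite_subset[OF assms(4)] by (intro sum.mono_neutral_right) auto
  also have "\<dots> = sum (p \<circ> \<sigma>) (U - {0})"
    using U0 assms(3) by (intro sum.cong) auto
  also have "\<dots> = sum p (\<sigma> ` (U - {0}))"
    using inj_on_subset[OF assms(1) U0] by (simp add: sum.reindex)
  finally show ?thesis .
qed

locale sparsest_fit_instance =
  fixes L K :: nat and q p :: "nat \<Rightarrow> real" and T :: "nat \<Rightarrow> nat set"
  assumes q_mono: "\<lbrakk>l \<in> {1..L}; l' \<in> {1..L}; l \<le> l'\<rbrakk> \<Longrightarrow> q l \<le> q l'"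
    and p_pos: "k \<in> {1..K} \<Longrightarrow> p k > 0"
    and p_inj: "inj_on p {1..K}"
    and T_subset: "l \<in> {1..L} \<Longrightarrow> T l \<subseteq> {1..K}"
    and q_eq_sum_T: "l \<in> {1..L} \<Longrightarrow> q l = sum p (T l)"
    and p_occurs: "k \<in> {1..K} \<Longrightarrow> \<exists>l\<in>{1..L}. q l = p k"
    and sum_p_inj: "\<lbrakk>S \<subseteq> {1..K}; S' \<subseteq> {1..K}; sum p S = sum p S'\<rbrakk> \<Longrightarrow> S = S'"
begin

lemma T_unique: "\<lbrakk>l \<in> {1..L}; S \<subseteq> {1..K}; q l = sum p S\<rbrakk> \<Longrightarrow> S = T l"
  using sum_p_inj T_subset q_eq_sum_T by metis

lemma T_eq_singleton_of_q_eq_p: "\<lbrakk>l \<in> {1..L}; j \<in> {1..K}; q l = p j\<rbrakk> \<Longrightarrow> T l = {j}"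
  using T_unique[of l "{j}"] by simp

lemma T_eq_singleton_of_first_occurrence:
  assumes l: "l \<in> {1..L}" and j: "j \<in> T l"
    and later: "\<And>l'. \<lbrakk>l' \<in> {1..L}; q l' = p j\<rbrakk> \<Longrightarrow> l \<le> l'"
  shows "T l = {j}" and "q l = p j"
proof -
  have jK: "j \<in> {1..K}" using T_subset[OF l] j by blast
  obtain l'' where l'': "l'' \<in> {1..L}" "q l'' = p j" using p_occurs[OF jK] by blast
  have "q l \<le> p j" using q_mono[OF l l''(1) later[OF l'']] l''(2) by simp
  moreover have "p j \<le> q l"
  proof -
    have "finite (T l)" using T_subset[OF l] finite_subset by blast
    moreover have "\<forall>b\<in>T l. 0 \<le> p b" using T_subset[OF l] p_pos by (fastforce intro: less_imp_le)
    ultimately have "sum p {j} \<le> sum p (T l)" using j by (intro sum_mono2) auto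
    thus ?thesis using q_eq_sum_T[OF l] by simp
  qed
  ultimately show "q l = p j" by simp
  then show "T l = {j}" using T_eq_singleton_of_q_eq_p[OF l jK] by simp
qed

definition relabels :: "nat \<Rightarrow> nat \<Rightarrow> (nat \<Rightarrow> real) \<Rightarrow> (nat \<Rightarrow> nat set) \<Rightarrow> (nat \<Rightarrow> nat) \<Rightarrow> bool"
  where "relabels l k p' A \<sigma> \<longleftrightarrow>
    inj_on \<sigma> {1..k} \<and> \<sigma> ` {1..k} \<subseteq> {1..K} \<and>
    (\<forall>i\<in>{1..k}. p' i = p (\<sigma> i) \<and> A i = {l'\<in>{1..l}. \<sigma> i \<in> T l'}) \<and>
    (\<forall>l'\<in>{1..l}. T l' \<subseteq> \<sigma> ` {1..k}) \<and>
    (\<forall>j\<in>{1..K}. (\<exists>l'\<in>{1..l}. q l' = p j) \<longrightarrow> j \<in> \<sigma> ` {1..k})"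

lemma relabels_fit:
  assumes R: "relabels l k p' A \<sigma>" and l: "Suc l \<in> {1..L}" and p0: "p' 0 = 0"
    and U: "U \<subseteq> {0..k}" and fit: "q (Suc l) = sum p' U"
  shows "relabels (Suc l) k p' (\<lambda>i. if i \<in> U then insert (Suc l) (A i) else A i) \<sigma>"
proof -
  from R have inj: "inj_on \<sigma> {1..k}" and img: "\<sigma> ` {1..k} \<subseteq> {1..K}"
    and p': "\<forall>i\<in>{1..k}. p' i = p (\<sigma> i)"
    unfolding relabels_def by blast+
  have U1: "U - {0} \<subseteq> {1..k}" using U by auto
  have TU: "T (Suc l) = \<sigma> ` (U - {0})"
  proof (rule T_unique[OF l, symmetric])
    show "\<sigma> ` (U - {0}) \<subseteq> {1..K}" using U1 img by blast
    show "q (Suc l) = sum p (\<sigma> ` (U - {0}))" using sum_relabel[OF inj p0 p' U] fit by simp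
  qed
  have memU: "i \<in> U \<longleftrightarrow> \<sigma> i \<in> T (Suc l)" if "i \<in> {1..k}" for i
    using inj_on_image_mem_iff[OF inj that U1] that TU by auto
  have found: "j \<in> T (Suc l)" if "j \<in> {1..K}" "q (Suc l) = p j" for j
    using T_eq_singleton_of_q_eq_p[OF l that] by simp
  have covered: "\<forall>l'\<in>{1..l}. T l' \<subseteq> \<sigma> ` {1..k}"
    and found_before: "\<forall>j\<in>{1..K}. (\<exists>l'\<in>{1..l}. q l' = p j) \<longrightarrow> j \<in> \<sigma> ` {1..k}"
    and A: "\<forall>i\<in>{1..k}. A i = {l'\<in>{1..l}. \<sigma> i \<in> T l'}"
    using R unfolding relabels_def by blast+
  have covered_new: "T (Suc l) \<subseteq> \<sigma> ` {1..k}" using TU U1 by blast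
  show ?thesis unfolding relabels_def
  proof (intro conjI)
    show "inj_on \<sigma> {1..k}" by (fact inj)
    show "\<sigma> ` {1..k} \<subseteq> {1..K}" by (fact img)
    show "\<forall>i\<in>{1..k}. p' i = p (\<sigma> i) \<and>
        (if i \<in> U then insert (Suc l) (A i) else A i) = {l' \<in> {1..Suc l}. \<sigma> i \<in> T l'}"
      unfolding filter_atLeastAtMost_Suc using p' A memU by simp
    show "\<forall>l'\<in>{1..Suc l}. T l' \<subseteq> \<sigma> ` {1..k}"
      using covered covered_new by (simp add: atLeastAtMostSuc_conv)
    show "\<forall>j\<in>{1..K}. (\<exists>l'\<in>{1..Suc l}. q l' = p j) \<longrightarrow> j \<in> \<sigma> ` {1..k}"
      using found_before found covered_new by (auto simp: atLeastAtMostSuc_conv)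
  qed
qed

lemma relabels_new_value:
  assumes R: "relabels l k p' A \<sigma>" and l: "Suc l \<in> {1..L}" and p0: "p' 0 = 0"
    and nofit: "\<nexists>U. U \<subseteq> {0..k} \<and> q (Suc l) = sum p' U"
  obtains j where "j \<in> {1..K}" "j \<notin> \<sigma> ` {1..k}" "T (Suc l) = {j}" "q (Suc l) = p j"
proof -
  from R have inj: "inj_on \<sigma> {1..k}" and p': "\<forall>i\<in>{1..k}. p' i = p (\<sigma> i)"
    and found: "\<forall>j\<in>{1..K}. (\<exists>l'\<in>{1..l}. q l' = p j) \<longrightarrow> j \<in> \<sigma> ` {1..k}"
    unfolding relabels_def by blast+
  have "\<not> T (Suc l) \<subseteq> \<sigma> ` {1..k}"
  proof
    assume sub: "T (Suc l) \<subseteq> \<sigma> ` {1..k}"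
    define U where "U = {i\<in>{1..k}. \<sigma> i \<in> T (Suc l)}"
    have U: "U \<subseteq> {0..k}" unfolding U_def by auto
    have "\<sigma> ` (U - {0}) = T (Suc l)" using sub unfolding U_def by force
    then have "q (Suc l) = sum p' U" using sum_relabel[OF inj p0 p' U] q_eq_sum_T[OF l] by simp
    then show False using nofit U by blast
  qed
  then obtain j where j: "j \<in> T (Suc l)" "j \<notin> \<sigma> ` {1..k}" by blast
  have jK: "j \<in> {1..K}" using T_subset[OF l] j(1) by blast
  have first: "Suc l \<le> l'" if "l' \<in> {1..L}" "q l' = p j" for l'
  proof (rule ccontr)
    assume "\<not> Suc l \<le> l'"
    then have "l' \<in> {1..l}" using that by auto
    then show False using found jK j(2) that by blast
  qed
  show thesis
    using that[OF jK j(2)] T_eq_singleton_of_first_occurrence[OF l j(1) first] by blast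
qed

lemma relabels_new:
  assumes R: "relabels l k p' A \<sigma>" and l: "Suc l \<in> {1..L}" and p0: "p' 0 = 0"
    and A_empty: "A (Suc k) = {}"
    and nofit: "\<nexists>U. U \<subseteq> {0..k} \<and> q (Suc l) = sum p' U"
  obtains j where "relabels (Suc l) (Suc k) (p'(Suc k := q (Suc l)))
      (A(Suc k := insert (Suc l) (A (Suc k)))) (\<sigma>(Suc k := j))"
proof -
  from R have inj: "inj_on \<sigma> {1..k}" and img: "\<sigma> ` {1..k} \<subseteq> {1..K}"
    and p': "\<forall>i\<in>{1..k}. p' i = p (\<sigma> i)"
    and covered: "\<forall>l'\<in>{1..l}. T l' \<subseteq> \<sigma> ` {1..k}"
    and found: "\<forall>j\<in>{1..K}. (\<exists>l'\<in>{1..l}. q l' = p j) \<longrightarrow> j \<in> \<sigma> ` {1..k}"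
    and A: "\<forall>i\<in>{1..k}. A i = {l'\<in>{1..l}. \<sigma> i \<in> T l'}"
    unfolding relabels_def by blast+
  obtain j where jK: "j \<in> {1..K}" and j: "j \<notin> \<sigma> ` {1..k}"
    and Tj: "T (Suc l) = {j}" and qj: "q (Suc l) = p j"
    using relabels_new_value[OF R l p0 nofit] .
  define \<sigma>' where "\<sigma>' = \<sigma>(Suc k := j)"
  have split: "{1..Suc k} = insert (Suc k) {1..k}" by auto
  have \<sigma>'_k: "\<sigma>' (Suc k) = j" unfolding \<sigma>'_def by simp
  have \<sigma>'_img: "\<sigma>' ` {1..k} = \<sigma> ` {1..k}" unfolding \<sigma>'_def by (intro image_cong) auto
  have img': "\<sigma>' ` {1..Suc k} = insert j (\<sigma> ` {1..k})"
    unfolding split using \<sigma>'_k \<sigma>'_img by simp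
  have "inj_on \<sigma>' {1..k}" unfolding \<sigma>'_def using inj j by (rule inj_on_fun_updI)
  then have inj': "inj_on \<sigma>' {1..Suc k}"
    unfolding split inj_on_insert using \<sigma>'_k \<sigma>'_img j by auto
  have j_new: "j \<notin> T l'" if "l' \<in> {1..l}" for l'
    using covered that j by blast
  show thesis
  proof (rule that[of j], unfold relabels_def \<sigma>'_def[symmetric], intro conjI)
    show "inj_on \<sigma>' {1..Suc k}" by (fact inj')
    show "\<sigma>' ` {1..Suc k} \<subseteq> {1..K}" using img' img jK by simp
    show "\<forall>i\<in>{1..Suc k}. (p'(Suc k := q (Suc l))) i = p (\<sigma>' i) \<and>
        (A(Suc k := insert (Suc l) (A (Suc k)))) i = {l' \<in> {1..Suc l}. \<sigma>' i \<in> T l'}"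
    proof
      fix i assume i: "i \<in> {1..Suc k}"
      show "(p'(Suc k := q (Suc l))) i = p (\<sigma>' i) \<and>
          (A(Suc k := insert (Suc l) (A (Suc k)))) i = {l' \<in> {1..Suc l}. \<sigma>' i \<in> T l'}"
      proof (cases "i = Suc k")
        case True
        have "{l' \<in> {1..Suc l}. j \<in> T l'} = {Suc l}"
          unfolding filter_atLeastAtMost_Suc using j_new Tj by auto
        then show ?thesis using True A_empty qj by (simp add: \<sigma>'_def)
      next
        case False
        then have i': "i \<in> {1..k}" and \<sigma>'i: "\<sigma>' i = \<sigma> i" using i by (auto simp: \<sigma>'_def)
        have "\<sigma> i \<notin> T (Suc l)" using Tj j i' by auto
        then show ?thesis
          unfolding filter_atLeastAtMost_Suc using p' A i' False \<sigma>'i by simp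
      qed
    qed
    show "\<forall>l'\<in>{1..Suc l}. T l' \<subseteq> \<sigma>' ` {1..Suc k}"
      using covered Tj img' by (auto simp: atLeastAtMostSuc_conv)
    show "\<forall>j'\<in>{1..K}. (\<exists>l'\<in>{1..Suc l}. q l' = p j') \<longrightarrow> j' \<in> \<sigma>' ` {1..Suc k}"
      using found img' qj inj_onD[OF p_inj _ _ jK] by (auto simp: atLeastAtMostSuc_conv)
  qed
qed

lemma sf_exec_relabels:
  assumes "sf_exec q l (k, p', A)" and "l \<le> L"
  shows "\<exists>\<sigma>. relabels l k p' A \<sigma>"
  using assms
proof (induction l "(k, p', A)" arbitrary: k p' A rule: sf_exec.induct)
  case init
  show ?case by (rule exI[of _ id]) (simp add: relabels_def)
next
  case (fit l k p' A U)
  have l: "Suc l \<in> {1..L}" using fit.prems by simp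
  then obtain \<sigma> where "relabels l k p' A \<sigma>" using fit.hyps(2) by auto
  from relabels_fit[OF this l sf_exec_p_zero[OF fit.hyps(1)] fit.hyps(3,4)]
  show ?case by blast
next
  case (new l k p' A)
  have l: "Suc l \<in> {1..L}" using new.prems by simp
  then obtain \<sigma> where R: "relabels l k p' A \<sigma>" using new.hyps(2) by auto
  obtain j where "relabels (Suc l) (Suc k) (p'(Suc k := q (Suc l)))
      (A(Suc k := insert (Suc l) (A (Suc k)))) (\<sigma>(Suc k := j))"
    using relabels_new[OF R l sf_exec_p_zero[OF new.hyps(1)]
        sf_exec_A_empty_beyond[OF new.hyps(1) lessI] new.hyps(3)] .
  then show ?case by blast
qed

theorem sf_exec_recovers:
  assumes "sf_exec q L (k', p', A')"
  shows "k' = K \<and>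
    (\<exists>\<sigma>. bij_betw \<sigma> {1..K} {1..K} \<and>
      (\<forall>k\<in>{1..K}. p' k = p (\<sigma> k) \<and> A' k = {l\<in>{1..L}. \<sigma> k \<in> T l}))"
proof -
  obtain \<sigma> where R: "relabels L k' p' A' \<sigma>" using sf_exec_relabels[OF assms] by blast
  then have inj: "inj_on \<sigma> {1..k'}" unfolding relabels_def by blast
  have img: "\<sigma> ` {1..k'} = {1..K}"
  proof
    show "\<sigma> ` {1..k'} \<subseteq> {1..K}" using R unfolding relabels_def by blast
    show "{1..K} \<subseteq> \<sigma> ` {1..k'}"
    proof
      fix j assume "j \<in> {1..K}"
      moreover obtain l where "l \<in> {1..L}" "q l = p j" using p_occurs[OF \<open>j \<in> {1..K}\<close>] by blast
      ultimately show "j \<in> \<sigma> ` {1..k'}" using R unfolding relabels_def by blast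
    qed
  qed
  have K: "k' = K" using card_image[OF inj] img by simp
  moreover have "bij_betw \<sigma> {1..K} {1..K}" using inj img K by (simp add: bij_betw_def)
  moreover have "\<forall>k\<in>{1..K}. p' k = p (\<sigma> k) \<and> A' k = {l\<in>{1..L}. \<sigma> k \<in> T l}"
    using R K unfolding relabels_def by blast
  ultimately show ?thesis by blast
qed

end

theorem lemma2:
  fixes L K :: nat and q p :: "nat \<Rightarrow> real" and T :: "nat \<Rightarrow> nat set"
  assumes q_sorted: "\<forall>l\<in>{1..L}. \<forall>l'\<in>{1..L}. l \<le> l' \<longrightarrow> q l \<le> q l'"
    and q_pos: "\<forall>l\<in>{1..L}. q l > 0"
    and p_pos: "\<forall>k\<in>{1..K}. p k > 0"
    and p_distinct: "inj_on p {1..K}"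
    and C1: "\<forall>l\<in>{1..L}. T l \<subseteq> {1..K} \<and> q l = (\<Sum>k\<in>T l. p k)"
    and C2: "\<forall>k\<in>{1..K}. \<exists>l\<in>{1..L}. q l = p k"
    and C3: "\<forall>S S'. S \<subseteq> {1..K} \<longrightarrow> S' \<subseteq> {1..K} \<longrightarrow> S \<noteq> S'
               \<longrightarrow> (\<Sum>k\<in>S. p k) \<noteq> (\<Sum>k\<in>S'. p k)"
  shows "(\<exists>st. sf_exec q L st) \<and>
         (\<forall>k' p' A'. sf_exec q L (k', p', A') \<longrightarrow>
            k' = K \<and>
            (\<exists>\<sigma>. bij_betw \<sigma> {1..K} {1..K} \<and>
                 (\<forall>k\<in>{1..K}. p' k = p (\<sigma> k) \<and> A' k = {l\<in>{1..L}. \<sigma> k \<in> T l})))"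
proof -
  interpret sparsest_fit_instance L K q p T
    using q_sorted p_pos p_distinct C1 C2 C3 by unfold_locales blast+
  show ?thesis using sf_exec_exists sf_exec_recovers by blast
qed

end
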